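(* For all $x,y\in\mathbb{B}^2$, $$|x-y|\le 2\,\operatorname{th}\frac{h_{\mathbb{B}^2}(x,y)}{4},$$ with equality when $x=-y$.
   Context: $\mathbb{B}^2$ is the open unit disk in $\mathbb{C}$; $\operatorname{th}$ is the hyperbolic tangent. For distinct $x,y\in\mathbb{B}^2$ the Hilbert metric is $h_{\mathbb{B}^2}(x,y)=\log\frac{|u-y||x-v|}{|u-x||y-v|}$, where $u,v$ are the intersection points of the line through $x,y$ with the unit circle, labelled so that $|u-x|<|u-y|$; also $h_{\mathbb{B}^2}(x,x)=0$. *)

theory Defs
  imports Complex_Main
begin

definition hilbert_endpoints :: "complex \<Rightarrow> complex \<Rightarrow> complex \<times> complex" where
  "hilbert_endpoints x y = (SOME (u, v). cmod u = 1 \<and> cmod v = 1 \<and> u \<noteq> v \<and>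
      (\<exists>t::real. u = x + of_real t * (y - x)) \<and>
      (\<exists>t::real. v = x + of_real t * (y - x)) \<and>
      cmod (u - x) < cmod (u - y))"

definition hilbert_disk :: "complex \<Rightarrow> complex \<Rightarrow> real" where
  "hilbert_disk x y = (if x = y then 0 else
     (let (u, v) = hilbert_endpoints x y in
        ln ((cmod (u - y) * cmod (x - v)) / (cmod (u - x) * cmod (y - v)))))"

end

theory Submission
  imports Defs "HOL-Analysis.Inner_Product" "HOL-Library.Quadratic_Discriminant"
begin

(* Parametrize the line through x and y as x + t (y - x). Its two intersections with the unit
   circle have parameters s < 0 < 1 < r, and with p = -s, q = r - 1 the Hilbert distance is
   h = ln X, X = (1 + p) (1 + q) / (p q), while the chord has length (1 + p + q) |x - y| <= 2.
   Since tanh (h / 4) = (sqrt X - 1) / (sqrt X + 1), it remains to see 1 / (1 + p + q) <= tanh (h / 4),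
   which reduces to (1 + p) (1 + q) (p + q)^2 - p q (2 + p + q)^2 = (1 + p + q) (p - q)^2 >= 0.
   For x = -y the chord is a diameter and p = q, so both inequalities become equalities. *)

lemma tanh_ln_div_4:
  fixes X :: real
  assumes "X > 0"
  shows "tanh (ln X / 4) = (sqrt X - 1) / (sqrt X + 1)"
proof -
  define w where "w = X powr (1/4)"
  have "w > 0" using assms by (simp add: w_def)
  moreover have "ln X / 4 = ln w" using assms by (simp add: w_def ln_powr)
  moreover have "w ^ 2 = sqrt X"
    using assms by (simp add: w_def powr_realpow[symmetric] powr_powr powr_half_sqrt del: ln_powr)
  ultimately show ?thesis using tanh_ln_real[of w] by metis
qed

lemma quadratic_eq_factor_roots:
  fixes a b c s r t :: real
  assumes "s \<noteq> r" "a * s^2 + b * s + c = 0" "a * r^2 + b * r + c = 0"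
  shows "a * t^2 + b * t + c = a * (t - s) * (t - r)"
proof -
  have "(s - r) * (a * (s + r) + b) = 0"
    using assms(2,3) by (simp add: algebra_simps power2_eq_square)
  hence "a * (s + r) + b = 0" using assms(1) by simp
  hence b: "b = - a * (s + r)" by linarith
  have "c = - a * s^2 - b * s" using assms(2) by linarith
  also have "\<dots> = a * s * r" unfolding b by (simp add: algebra_simps power2_eq_square)
  finally have "c = a * s * r" .
  thus ?thesis unfolding b by (simp add: algebra_simps power2_eq_square)
qed

lemma quadratic_neg_between_roots:
  fixes a b c s r t :: real
  assumes "a > 0" "s \<noteq> r" "a * s^2 + b * s + c = 0" "a * r^2 + b * r + c = 0"
    and "a * t^2 + b * t + c < 0"
  shows "min s r < t \<and> t < max s r"
proof -
  have "a * ((t - s) * (t - r)) < 0"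
    using assms quadratic_eq_factor_roots[of s r a b c t] by (simp add: mult.assoc)
  hence "(t - s) * (t - r) < 0" using assms(1) by (simp add: mult_less_0_iff)
  thus ?thesis by (auto simp: mult_less_0_iff)
qed

lemma norm_line_power2:
  fixes x d :: "'a::real_inner"
  shows "norm (x + t *\<^sub>R d)^2 = norm d^2 * t^2 + 2 * inner x d * t + norm x^2"
  unfolding power2_norm_eq_inner by (simp add: inner_commute algebra_simps power2_eq_square)

lemma unit_sphere_line_params_straddle:
  fixes x d :: "'a::real_inner"
  assumes "norm x < 1" "norm (x + d) < 1" "s \<noteq> r"
    and "norm (x + s *\<^sub>R d) = 1" "norm (x + r *\<^sub>R d) = 1"
  shows "min s r < 0 \<and> 1 < max s r"
proof -
  define f where "f t = norm d^2 * t^2 + 2 * inner x d * t + (norm x^2 - 1)" for t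
  have f: "f t = norm (x + t *\<^sub>R d)^2 - 1" for t
    by (simp add: f_def norm_line_power2)
  have "d \<noteq> 0" using assms(1,4) by auto
  hence pos: "norm d^2 > 0" by simp
  have roots: "f s = 0" "f r = 0" using assms(4,5) by (simp_all add: f)
  have between: "min s r < t \<and> t < max s r" if "f t < 0" for t
    using quadratic_neg_between_roots[of "norm d^2" s r "2 * inner x d" "norm x^2 - 1" t]
      pos assms(3) roots that unfolding f_def by blast
  have "f 0 < 0" "f 1 < 0"
    using assms(1,2) by (simp_all add: f power_less_one_iff)
  thus ?thesis using between by fastforce
qed

lemma unit_sphere_line_params_exist:
  fixes x d :: "'a::real_inner"
  assumes "norm x < 1" "d \<noteq> 0"
  obtains s r where "s < r" "norm (x + s *\<^sub>R d) = 1" "norm (x + r *\<^sub>R d) = 1"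
proof -
  have "norm x^2 < 1" using assms(1) by (simp add: power_less_one_iff)
  hence "norm d^2 * (norm x^2 - 1) < 0" using assms(2) by (simp add: mult_pos_neg)
  hence "0 < (2 * inner x d)^2 + 4 * - (norm d^2 * (norm x^2 - 1))"
    by (intro add_nonneg_pos) auto
  also have "\<dots> = discrim (norm d^2) (2 * inner x d) (norm x^2 - 1)"
    by (simp add: discrim_def)
  finally have "discrim (norm d^2) (2 * inner x d) (norm x^2 - 1) > 0" .
  moreover have "norm d^2 \<noteq> 0" using assms(2) by simp
  ultimately obtain s r where "s \<noteq> r"
    and "norm d^2 * s^2 + 2 * inner x d * s + (norm x^2 - 1) = 0"
    and "norm d^2 * r^2 + 2 * inner x d * r + (norm x^2 - 1) = 0"
    using discriminant_pos_ex[of "norm d^2" "2 * inner x d" "norm x^2 - 1"] by blast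
  hence "norm (x + s *\<^sub>R d)^2 = 1" "norm (x + r *\<^sub>R d)^2 = 1"
    by (simp_all add: norm_line_power2)
  hence "norm (x + s *\<^sub>R d) = 1" "norm (x + r *\<^sub>R d) = 1"
    using norm_ge_zero[of "x + s *\<^sub>R d"] norm_ge_zero[of "x + r *\<^sub>R d"]
    by (auto simp: power2_eq_1_iff)
  thus ?thesis using that \<open>s \<noteq> r\<close> by (cases "s < r") (auto simp: neq_iff)
qed

lemma two_div_le_tanh_cross_ratio:
  fixes p q :: real
  assumes "p > 0" "q > 0"
  shows "2 / (1 + p + q) \<le> 2 * tanh (ln ((1 + p) * (1 + q) / (p * q)) / 4)"
proof -
  define X where "X = (1 + p) * (1 + q) / (p * q)"
  have "X > 0" using assms by (simp add: X_def)
  have "(1 + p) * (1 + q) * (p + q)^2 - p * q * (2 + p + q)^2 = (1 + p + q) * (p - q)^2"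
    by (simp add: algebra_simps power2_eq_square)
  moreover have "(1 + p + q) * (p - q)^2 \<ge> 0" using assms by simp
  ultimately have "p * q * (2 + p + q)^2 \<le> (1 + p) * (1 + q) * (p + q)^2" by linarith
  hence "((2 + p + q) / (p + q))^2 \<le> X"
    using assms by (simp add: X_def power_divide divide_simps mult.commute)
  hence "(2 + p + q) / (p + q) \<le> sqrt X" using real_le_rsqrt by blast
  hence "2 + p + q \<le> sqrt X * (p + q)" using assms by (simp add: divide_simps)
  moreover have "sqrt X + 1 > 0" using \<open>X > 0\<close> by (simp add: add_pos_pos)
  ultimately have "1 / (1 + p + q) \<le> (sqrt X - 1) / (sqrt X + 1)"
    using assms by (simp add: divide_simps algebra_simps)
  hence "1 / (1 + p + q) \<le> tanh (ln X / 4)" using tanh_ln_div_4[OF \<open>X > 0\<close>] by simp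
  thus ?thesis using mult_left_mono[of _ _ 2] by (simp add: X_def)
qed

lemma tanh_cross_ratio_diag:
  fixes p :: real
  assumes "p > 0"
  shows "2 * tanh (ln ((1 + p) * (1 + p) / (p * p)) / 4) = 2 / (1 + p + p)"
proof -
  define X where "X = (1 + p) * (1 + p) / (p * p)"
  have "X > 0" using assms by (simp add: X_def)
  have sqrt_X: "sqrt X = (1 + p) / p"
    using assms by (simp add: X_def real_sqrt_mult real_sqrt_divide)
  have "(sqrt X - 1) / (sqrt X + 1) = 1 / (1 + p + p)"
    unfolding sqrt_X using assms by (simp add: field_simps)
  thus ?thesis using tanh_ln_div_4[OF \<open>X > 0\<close>] by (simp add: X_def)
qed

lemma line_points_diff:
  fixes x d :: "'a::real_vector"
  shows "(x + s *\<^sub>R d) - (x + t *\<^sub>R d) = (s - t) *\<^sub>R d"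
  by (simp add: scaleR_diff_left)

lemma chord_length_le_2:
  fixes x d :: "'a::real_normed_vector"
  assumes "norm (x + s *\<^sub>R d) = 1" "norm (x + r *\<^sub>R d) = 1"
  shows "\<bar>r - s\<bar> * norm d \<le> 2"
proof -
  have "\<bar>r - s\<bar> * norm d = norm ((x + r *\<^sub>R d) - (x + s *\<^sub>R d))"
    by (simp only: line_points_diff norm_scaleR real_norm_def)
  also have "\<dots> \<le> 2" using norm_triangle_ineq4 assms by (metis one_add_one)
  finally show ?thesis .
qed

lemma antipodal_line_params:
  fixes x y :: "'a::real_normed_vector"
  assumes "x = - y" "s < r"
    and "norm (x + s *\<^sub>R (y - x)) = 1" "norm (x + r *\<^sub>R (y - x)) = 1"
  shows "s + r = 1" "(r - s) * norm (x - y) = 2"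
proof -
  have line: "norm (x + t *\<^sub>R (y - x)) = \<bar>1 - 2 * t\<bar> * norm x" for t
  proof -
    have "x + t *\<^sub>R (y - x) = (1 - 2 * t) *\<^sub>R x"
      using assms(1) by (simp add: algebra_simps scaleR_diff_left flip: scaleR_2)
    thus ?thesis by simp
  qed
  have "\<bar>1 - 2 * s\<bar> * norm x = \<bar>1 - 2 * r\<bar> * norm x" using assms(3,4) by (simp add: line)
  moreover have "norm x \<noteq> 0" using assms(3) line[of s] by auto
  ultimately have "\<bar>1 - 2 * s\<bar> = \<bar>1 - 2 * r\<bar>" by simp
  thus "s + r = 1" using assms(2) by (auto simp: abs_if split: if_splits)
  hence "r - s = 1 - 2 * s" by simp
  moreover have "x - y = 2 *\<^sub>R x" using assms(1) by (simp add: scaleR_2)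
  ultimately have "(r - s) * norm (x - y) = 2 * ((1 - 2 * s) * norm x)" by simp
  also have "(1 - 2 * s) * norm x = 1" using assms(2,3) line[of s] \<open>s + r = 1\<close> by simp
  finally show "(r - s) * norm (x - y) = 2" by simp
qed

lemma hilbert_endpoints_line_params:
  fixes x y :: complex
  assumes "cmod x < 1" "cmod y < 1" "x \<noteq> y"
  obtains s r where "s < 0" "1 < r"
    "cmod (x + s *\<^sub>R (y - x)) = 1" "cmod (x + r *\<^sub>R (y - x)) = 1"
    "hilbert_endpoints x y = (x + s *\<^sub>R (y - x), x + r *\<^sub>R (y - x))"
proof -
  define d where "d = y - x"
  have "d \<noteq> 0" "y = x + d" using assms(3) by (simp_all add: d_def)
  have straddle: "min s r < 0 \<and> 1 < max s r"
    if "s \<noteq> r" "cmod (x + s *\<^sub>R d) = 1" "cmod (x + r *\<^sub>R d) = 1" for s r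
    using unit_sphere_line_params_straddle[of x d s r] assms(1,2) that \<open>y = x + d\<close> by simp
  have on_line: "x + t *\<^sub>R d = x + of_real t * (y - x)" for t
    by (simp add: d_def scaleR_conv_of_real)
  define P where "P = (\<lambda>(u, v). cmod u = 1 \<and> cmod v = 1 \<and> u \<noteq> v \<and>
      (\<exists>t::real. u = x + of_real t * (y - x)) \<and>
      (\<exists>t::real. v = x + of_real t * (y - x)) \<and>
      cmod (u - x) < cmod (u - y))"
  have endpoints: "hilbert_endpoints x y = (SOME uv. P uv)"
    unfolding hilbert_endpoints_def P_def ..
  obtain s0 r0 where "s0 < r0" "cmod (x + s0 *\<^sub>R d) = 1" "cmod (x + r0 *\<^sub>R d) = 1"
    using unit_sphere_line_params_exist assms(1) \<open>d \<noteq> 0\<close> by blast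
  moreover from this have "s0 < 0" using straddle[of s0 r0] by simp
  moreover have "cmod ((x + s0 *\<^sub>R d) - x) < cmod ((x + s0 *\<^sub>R d) - y)"
  proof -
    have "(x + s0 *\<^sub>R d) - y = (s0 - 1) *\<^sub>R d"
      using line_points_diff[of x s0 d 1] \<open>y = x + d\<close> by simp
    moreover have "\<bar>s0\<bar> * cmod d < \<bar>s0 - 1\<bar> * cmod d"
      using \<open>s0 < 0\<close> \<open>d \<noteq> 0\<close> by (intro mult_strict_right_mono) auto
    ultimately show ?thesis by (metis add_diff_cancel_left' norm_scaleR)
  qed
  moreover have "x + s0 *\<^sub>R d \<noteq> x + r0 *\<^sub>R d" using \<open>s0 < r0\<close> \<open>d \<noteq> 0\<close> by simp
  ultimately have "P (x + s0 *\<^sub>R d, x + r0 *\<^sub>R d)"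
    unfolding P_def prod.case using on_line[of s0] on_line[of r0] by blast
  hence "P (hilbert_endpoints x y)" unfolding endpoints by (rule someI)
  then obtain s r where uv: "hilbert_endpoints x y = (x + s *\<^sub>R d, x + r *\<^sub>R d)"
    and u: "cmod (x + s *\<^sub>R d) = 1" and v: "cmod (x + r *\<^sub>R d) = 1" and "s \<noteq> r"
    and closer: "cmod ((x + s *\<^sub>R d) - x) < cmod ((x + s *\<^sub>R d) - y)"
    unfolding P_def by (auto simp flip: on_line split: prod.splits)
  (* the labelling of the endpoints puts u beyond x, not beyond y *)
  have "\<bar>s\<bar> < \<bar>s - 1\<bar>"
    using closer line_points_diff[of x s d 0] line_points_diff[of x s d 1] \<open>y = x + d\<close> \<open>d \<noteq> 0\<close>
    by simp
  with straddle[OF \<open>s \<noteq> r\<close> u v] have "s < 0" "1 < r" by auto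
  thus ?thesis using that u v uv by (simp add: d_def)
qed

lemma hilbert_disk_line_params:
  fixes x y :: complex
  assumes "cmod x < 1" "cmod y < 1" "x \<noteq> y"
  obtains s r where "s < 0" "1 < r"
    "cmod (x + s *\<^sub>R (y - x)) = 1" "cmod (x + r *\<^sub>R (y - x)) = 1"
    "hilbert_disk x y = ln ((1 - s) * r / (- s * (r - 1)))"
proof -
  define d where "d = y - x"
  have "d \<noteq> 0" "y = x + d" using assms(3) by (simp_all add: d_def)
  obtain s r where "s < 0" "1 < r" and u: "cmod (x + s *\<^sub>R d) = 1"
    and v: "cmod (x + r *\<^sub>R d) = 1"
    and uv: "hilbert_endpoints x y = (x + s *\<^sub>R d, x + r *\<^sub>R d)"
    using hilbert_endpoints_line_params assms unfolding d_def by blast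
  have "(cmod ((x + s *\<^sub>R d) - y) * cmod (x - (x + r *\<^sub>R d))) /
          (cmod ((x + s *\<^sub>R d) - x) * cmod (y - (x + r *\<^sub>R d)))
        = (\<bar>s - 1\<bar> * \<bar>r\<bar> * cmod d^2) / (\<bar>s\<bar> * \<bar>1 - r\<bar> * cmod d^2)"
    using line_points_diff[of x s d 1] line_points_diff[of x 0 d r] line_points_diff[of x s d 0]
      line_points_diff[of x 1 d r] \<open>y = x + d\<close>
    by (simp add: power2_eq_square mult_ac)
  also have "\<dots> = (1 - s) * r / (- s * (r - 1))"
    using \<open>s < 0\<close> \<open>1 < r\<close> \<open>d \<noteq> 0\<close> by simp
  finally show ?thesis
    using that \<open>s < 0\<close> \<open>1 < r\<close> u v assms(3) uv by (simp add: hilbert_disk_def d_def)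
qed

lemma hilbert_disk_chord_params:
  fixes x y :: complex
  assumes "cmod x < 1" "cmod y < 1" "x \<noteq> y"
  obtains p q where "p > 0" "q > 0" "hilbert_disk x y = ln ((1 + p) * (1 + q) / (p * q))"
    "(1 + p + q) * cmod (x - y) \<le> 2"
    "x = - y \<Longrightarrow> q = p \<and> (1 + p + q) * cmod (x - y) = 2"
proof -
  obtain s r where "s < 0" "1 < r"
    and u: "cmod (x + s *\<^sub>R (y - x)) = 1" and v: "cmod (x + r *\<^sub>R (y - x)) = 1"
    and hilbert: "hilbert_disk x y = ln ((1 - s) * r / (- s * (r - 1)))"
    using hilbert_disk_line_params assms by blast
  show ?thesis
  proof (rule that[of "- s" "r - 1"])
    show "- s > 0" "r - 1 > 0" using \<open>s < 0\<close> \<open>1 < r\<close> by simp_all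
    show "hilbert_disk x y = ln ((1 + - s) * (1 + (r - 1)) / (- s * (r - 1)))"
      using hilbert by simp
    show "(1 + - s + (r - 1)) * cmod (x - y) \<le> 2"
      using chord_length_le_2[OF u v] \<open>s < 0\<close> \<open>1 < r\<close> by (simp add: norm_minus_commute)
    show "r - 1 = - s \<and> (1 + - s + (r - 1)) * cmod (x - y) = 2" if "x = - y"
      using antipodal_line_params[OF that _ u v] \<open>s < 0\<close> \<open>1 < r\<close> by simp
  qed
qed

theorem mainTheorem11:
  fixes x y :: complex
  assumes "cmod x < 1" and "cmod y < 1"
  shows "cmod (x - y) \<le> 2 * tanh (hilbert_disk x y / 4) \<and>
         (x = - y \<longrightarrow> cmod (x - y) = 2 * tanh (hilbert_disk x y / 4))"
proof (cases "x = y")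
  case True
  thus ?thesis by (simp add: hilbert_disk_def)
next
  case False
  then obtain p q where "p > 0" "q > 0"
    and hilbert: "hilbert_disk x y = ln ((1 + p) * (1 + q) / (p * q))"
    and chord: "(1 + p + q) * cmod (x - y) \<le> 2"
    and diameter: "x = - y \<Longrightarrow> q = p \<and> (1 + p + q) * cmod (x - y) = 2"
    using hilbert_disk_chord_params assms by blast
  have "cmod (x - y) \<le> 2 / (1 + p + q)" using chord \<open>p > 0\<close> \<open>q > 0\<close> by (simp add: field_simps)
  also have "\<dots> \<le> 2 * tanh (hilbert_disk x y / 4)"
    unfolding hilbert using two_div_le_tanh_cross_ratio \<open>p > 0\<close> \<open>q > 0\<close> .
  finally have "cmod (x - y) \<le> 2 * tanh (hilbert_disk x y / 4)" .
  moreover have "cmod (x - y) = 2 * tanh (hilbert_disk x y / 4)" if "x = - y"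
  proof -
    from diameter[OF that] have "q = p" "(1 + p + p) * cmod (x - y) = 2" by auto
    hence "cmod (x - y) = 2 / (1 + p + p)" using \<open>p > 0\<close> by (simp add: eq_divide_eq mult.commute)
    also have "\<dots> = 2 * tanh (hilbert_disk x y / 4)"
      unfolding hilbert \<open>q = p\<close> using tanh_cross_ratio_diag[OF \<open>p > 0\<close>] by simp
    finally show ?thesis .
  qed
  ultimately show ?thesis by blast
qed

end
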